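(* Let $L\ge1$, $D\ge1$, and for $\mathbf{u}=[\mathbf{u}_l]_{l=1}^L$ with $\mathbf{u}_l\in\mathbb{R}^D$ let $\mathcal{P}_{conv}(\mathbf{u})\in\mathbb{R}^D$ be the vector with $\langle\mathbf{x},\mathcal{P}_{conv}(\mathbf{u})\rangle=\big((((\mathbf{x}\star\mathbf{u}_1)\star\mathbf{u}_2)\cdots)\star\mathbf{u}_{L-1}\big)^\top\mathbf{u}_L$ for all $\mathbf{x}\in\mathbb{R}^D$. Then for every $\mathbf{w}\in\mathbb{R}^D$, $$\mathcal{R}_{\mathcal{P}_{conv}}(\mathbf{w}):=\min_{\mathbf{u}:\mathcal{P}_{conv}(\mathbf{u})=\mathbf{w}}\|\mathbf{u}\|_2^2=L\|\hat{\mathbf{w}}\|_{2/L}^{2/L}.$$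
   Context: Indices run over $0,\dots,D-1$. $(\mathbf{h}\star\mathbf{u})[d]=\frac{1}{\sqrt D}\sum_{k=0}^{D-1}\mathbf{u}[k]\mathbf{h}[(d+k)\bmod D]$. $\hat{\mathbf{w}}[d]=\frac{1}{\sqrt D}\sum_{p=0}^{D-1}\mathbf{w}[p]e^{-2\pi\mathrm{i}pd/D}$. $\|\mathbf{u}\|_2^2=\sum_l\|\mathbf{u}_l\|_2^2$; for $p>0$ and $\mathbf{z}\in\mathbb{C}^D$, $\|\mathbf{z}\|_p=(\sum_d|\mathbf{z}[d]|^p)^{1/p}$. *)

theory Defs
  imports "HOL-Analysis.Analysis"
begin

text \<open>Vectors in R^D are functions nat => real, only indices 0..D-1 matter.
  A tuple u = [u_l]_{l=1..L} is a function nat => (nat => real), with l ranging over 1..L.\<close>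

definition ccorr :: "nat \<Rightarrow> (nat \<Rightarrow> real) \<Rightarrow> (nat \<Rightarrow> real) \<Rightarrow> (nat \<Rightarrow> real)" where
  "ccorr D h u = (\<lambda>d. (1 / sqrt (real D)) * (\<Sum>k<D. u k * h ((d + k) mod D)))"

fun citer :: "nat \<Rightarrow> (nat \<Rightarrow> nat \<Rightarrow> real) \<Rightarrow> (nat \<Rightarrow> real) \<Rightarrow> nat \<Rightarrow> (nat \<Rightarrow> real)" where
  "citer D u x 0 = x"
| "citer D u x (Suc l) = ccorr D (citer D u x l) (u (Suc l))"

definition vinner :: "nat \<Rightarrow> (nat \<Rightarrow> real) \<Rightarrow> (nat \<Rightarrow> real) \<Rightarrow> real" where
  "vinner D x y = (\<Sum>d<D. x d * y d)"

definition Pconv :: "nat \<Rightarrow> nat \<Rightarrow> (nat \<Rightarrow> nat \<Rightarrow> real) \<Rightarrow> (nat \<Rightarrow> real)" where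
  "Pconv D L u = (THE p. (\<forall>d\<ge>D. p d = 0) \<and>
      (\<forall>x. vinner D x p = vinner D (citer D u x (L - 1)) (u L)))"

definition sqnorm_tuple :: "nat \<Rightarrow> nat \<Rightarrow> (nat \<Rightarrow> nat \<Rightarrow> real) \<Rightarrow> real" where
  "sqnorm_tuple D L u = (\<Sum>l\<in>{1..L}. \<Sum>d<D. (u l d)\<^sup>2)"

definition dft :: "nat \<Rightarrow> (nat \<Rightarrow> real) \<Rightarrow> (nat \<Rightarrow> complex)" where
  "dft D w = (\<lambda>d. (1 / sqrt (real D)) *
      (\<Sum>p<D. complex_of_real (w p) * exp (- 2 * pi * \<i> * of_nat p * of_nat d / of_nat D)))"

definition pnorm_pow :: "nat \<Rightarrow> real \<Rightarrow> (nat \<Rightarrow> complex) \<Rightarrow> real" where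
  "pnorm_pow D p z = (\<Sum>d<D. cmod (z d) powr p)"

end

theory Submission
  imports Defs
begin

(* The unitary DFT turns the circular correlation x \<star> u into multiplication by conj (DFT u),
   so by Parseval <x, P_conv u> = sum_m conj (DFT x)_m * prod_l (DFT u_l)_m: the DFT of P_conv u
   is the pointwise product of the DFTs of the factors, and the constraint P_conv u = w decouples
   over frequencies. By Plancherel the cost is sum_m sum_l |(DFT u_l)_m|^2, and for each m the
   AM-GM inequality gives sum_l |z_l|^2 >= L |prod_l z_l|^(2/L). Equality holds when every factor
   has modulus |(DFT w)_m|^(1/L) and the first one also carries the phase of (DFT w)_m; these
   spectra are Hermitian, hence DFTs of real vectors. *)

definition unit_root :: "nat \<Rightarrow> int \<Rightarrow> complex" where
  "unit_root D k = exp (2 * of_real pi * \<i> * of_int k / of_nat D)"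

lemma unit_root_add: "unit_root D (a + b) = unit_root D a * unit_root D b"
  unfolding unit_root_def by (simp add: exp_add[symmetric] add_divide_distrib distrib_left distrib_right)

lemma unit_root_0 [simp]: "unit_root D 0 = 1"
  by (simp add: unit_root_def)

lemma cnj_unit_root: "cnj (unit_root D k) = unit_root D (- k)"
  by (simp add: unit_root_def exp_cnj)

lemma unit_root_power: "unit_root D k ^ n = unit_root D (int n * k)"
  by (induction n) (simp_all add: unit_root_add[symmetric] algebra_simps)

lemma unit_root_mult_self: "D > 0 \<Longrightarrow> unit_root D (int D * t) = 1"
  by (simp add: unit_root_def exp_eq_1 field_simps)

lemma unit_root_mod: "D > 0 \<Longrightarrow> unit_root D (k mod int D) = unit_root D k"
  by (metis mult.commute unit_root_add unit_root_mult_self mult_1_right mod_div_mult_eq)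

lemma unit_root_mod_mult: "D > 0 \<Longrightarrow> unit_root D (a mod int D * b) = unit_root D (a * b)"
  by (metis mod_mult_left_eq unit_root_mod)

lemma unit_root_eq_1_iff:
  assumes "D > 0"
  shows "unit_root D k = 1 \<longleftrightarrow> int D dvd k"
proof -
  have "unit_root D k = unit_root D (int (nat (k mod int D)))"
    using assms by (simp add: unit_root_mod)
  also have "\<dots> = 1 \<longleftrightarrow> D dvd nat (k mod int D)"
    unfolding unit_root_def of_int_of_nat_eq
    by (rule complex_root_unity_eq_1) (use assms in simp)
  also have "\<dots> \<longleftrightarrow> int D dvd k"
  proof -
    have "k mod int D = int (nat (k mod int D))"
      using assms by simp
    then have "D dvd nat (k mod int D) \<longleftrightarrow> int D dvd k mod int D"
      by (metis int_dvd_int_iff)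
    then show ?thesis
      by (simp add: dvd_mod_iff)
  qed
  finally show ?thesis .
qed

lemma sum_unit_root:
  assumes "D > 0"
  shows "(\<Sum>m<D. unit_root D (int m * k)) = (if int D dvd k then of_nat D else 0)"
proof -
  have "unit_root D k ^ D = 1"
    using assms by (simp add: unit_root_power unit_root_mult_self)
  then show ?thesis
    using assms by (simp add: unit_root_power[symmetric] sum_gp_strict unit_root_eq_1_iff)
qed

lemma unit_root_reflect:
  assumes "D > 0" "m \<le> D"
  shows "unit_root D (int ((D - m) mod D) * a) = unit_root D (- int m * a)"
proof -
  have "int ((D - m) mod D) = (int D - int m) mod int D"
    by (simp only: of_nat_mod of_nat_diff[OF assms(2)])
  then have "unit_root D (int ((D - m) mod D) * a) = unit_root D ((int D - int m) * a)"
    using assms(1) by (simp only: unit_root_mod_mult)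
  also have "(int D - int m) * a = int D * a + - int m * a"
    by (simp add: algebra_simps)
  also have "unit_root D \<dots> = unit_root D (- int m * a)"
    using assms(1) by (simp only: unit_root_add unit_root_mult_self mult_1_left)
  finally show ?thesis .
qed

lemma int_dvd_diff_iff_eq: "j < D \<Longrightarrow> k < D \<Longrightarrow> int D dvd int j - int k \<longleftrightarrow> j = k"
  by (simp add: mod_eq_dvd_iff[symmetric] zmod_int)

lemma sum_unit_root_diff:
  "D > 0 \<Longrightarrow> j < D \<Longrightarrow> k < D \<Longrightarrow>
    (\<Sum>m<D. unit_root D (int m * (int j - int k))) = (if j = k then of_nat D else 0)"
  by (simp add: sum_unit_root int_dvd_diff_iff_eq)

lemma sum_mod_shift:
  fixes f :: "nat \<Rightarrow> 'a::comm_monoid_add"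
  assumes "D > 0"
  shows "(\<Sum>d<D. f ((d + k) mod D)) = (\<Sum>j<D. f j)"
proof -
  have "inj_on (\<lambda>d. (d + k) mod D) {..<D}"
  proof (rule inj_onI)
    fix d d' assume d: "d \<in> {..<D}" "d' \<in> {..<D}" and "(d + k) mod D = (d' + k) mod D"
    then have "int D dvd (int d + int k) - (int d' + int k)"
      by (metis mod_eq_dvd_iff of_nat_add of_nat_mod)
    then show "d = d'"
      using d int_dvd_diff_iff_eq by simp
  qed
  then have "bij_betw (\<lambda>d. (d + k) mod D) {..<D} {..<D}"
    using assms by (simp add: bij_betw_def endo_inj_surj image_subset_iff)
  then show ?thesis
    by (rule sum.reindex_bij_betw)
qed

lemma sum_mod_reflect:
  fixes f :: "nat \<Rightarrow> 'a::comm_monoid_add"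
  shows "(\<Sum>m<D. f ((D - m) mod D)) = (\<Sum>m<D. f m)"
proof -
  have "(D - (D - a) mod D) mod D = a" and "(D - a) mod D < D" if "a < D" for a
    using that by (cases "a = 0"; simp)+
  then show ?thesis
    by (intro sum.reindex_bij_witness[where i="\<lambda>m. (D - m) mod D" and j="\<lambda>m. (D - m) mod D"]) auto
qed

lemma dft_unit_root:
  "dft D v m = of_real (1 / sqrt (real D)) * (\<Sum>p<D. of_real (v p) * unit_root D (- (int p * int m)))"
  unfolding dft_def unit_root_def by (simp add: algebra_simps)

lemma cnj_dft:
  "cnj (dft D v m) = of_real (1 / sqrt (real D)) * (\<Sum>p<D. of_real (v p) * unit_root D (int p * int m))"
  by (simp add: dft_unit_root cnj_unit_root)

lemma dft_cong: "(\<And>d. d < D \<Longrightarrow> v d = v' d) \<Longrightarrow> dft D v = dft D v'"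
  unfolding dft_def by (intro ext arg_cong2[where f="(*)"] refl sum.cong) simp_all

lemma dft_reflect:
  assumes "D > 0" "m < D"
  shows "dft D v ((D - m) mod D) = cnj (dft D v m)"
proof -
  have "unit_root D (- (int p * int ((D - m) mod D))) = unit_root D (int p * int m)" for p
    using unit_root_reflect[OF assms(1), of m "- int p"] assms(2) by (simp add: ac_simps)
  then show ?thesis
    by (simp add: dft_unit_root cnj_unit_root)
qed

lemma of_real_inverse_sqrt_square:
  "D > 0 \<Longrightarrow> of_real (1 / sqrt (real D)) * of_real (1 / sqrt (real D)) = (of_real (1 / real D) :: complex)"
  by (simp flip: of_real_mult)

lemma cnj_dft_mult_dft:
  assumes "D > 0"
  shows "cnj (dft D a m) * dft D b m = of_real (1 / real D) *
    (\<Sum>j<D. \<Sum>k<D. of_real (a j) * of_real (b k) * unit_root D (int m * (int j - int k)))"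
proof -
  let ?s = "complex_of_real (1 / sqrt (real D))"
  have "of_real (a j) * unit_root D (int j * int m) * (of_real (b k) * unit_root D (- (int k * int m))) =
      of_real (a j) * of_real (b k) * unit_root D (int m * (int j - int k))" for j k
  proof -
    have "int m * (int j - int k) = int j * int m + - (int k * int m)"
      by (simp add: algebra_simps)
    then show ?thesis
      by (simp only: unit_root_add mult_ac)
  qed
  moreover have "cnj (dft D a m) * dft D b m = (?s * ?s) *
      ((\<Sum>j<D. of_real (a j) * unit_root D (int j * int m)) *
       (\<Sum>k<D. of_real (b k) * unit_root D (- (int k * int m))))"
    unfolding cnj_dft unfolding dft_unit_root by (simp only: mult_ac)
  ultimately show ?thesis
    by (simp only: sum_product of_real_inverse_sqrt_square[OF assms])
qed

theorem parseval:
  assumes "D > 0"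
  shows "of_real (vinner D a b) = (\<Sum>m<D. cnj (dft D a m) * dft D b m)"
proof -
  let ?c = "complex_of_real (1 / real D)"
  let ?e = "\<lambda>m j k. of_real (a j) * of_real (b k) * unit_root D (int m * (int j - int k))"
  have "(\<Sum>m<D. cnj (dft D a m) * dft D b m) = ?c * (\<Sum>m<D. \<Sum>j<D. \<Sum>k<D. ?e m j k)"
    by (simp only: cnj_dft_mult_dft[OF assms] sum_distrib_left)
  also have "\<dots> = ?c * (\<Sum>j<D. \<Sum>m<D. \<Sum>k<D. ?e m j k)"
    by (subst sum.swap) (rule refl)
  also have "\<dots> = ?c * (\<Sum>j<D. \<Sum>k<D. \<Sum>m<D. ?e m j k)"
    by (rule arg_cong[where f="(*) ?c"], rule sum.cong[OF refl], rule sum.swap)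
  also have "\<dots> =
      ?c * (\<Sum>j<D. \<Sum>k<D. of_real (a j) * of_real (b k) * (\<Sum>m<D. unit_root D (int m * (int j - int k))))"
    by (simp only: sum_distrib_left)
  also have "\<dots> = ?c * (\<Sum>j<D. of_real (a j) * of_real (b j) * of_nat D)"
    using assms by (simp add: sum_unit_root_diff if_distrib cong: if_cong)
  also have "\<dots> = of_real (vinner D a b)"
    using assms by (simp add: vinner_def sum_distrib_left)
  finally show ?thesis
    by simp
qed

corollary plancherel:
  assumes "D > 0"
  shows "(\<Sum>d<D. (v d)\<^sup>2) = (\<Sum>m<D. (cmod (dft D v m))\<^sup>2)"
proof -
  have "complex_of_real (\<Sum>d<D. (v d)\<^sup>2) = (\<Sum>m<D. cnj (dft D v m) * dft D v m)"
    unfolding parseval[OF assms, symmetric] by (simp add: vinner_def power2_eq_square)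
  also have "\<dots> = of_real (\<Sum>m<D. (cmod (dft D v m))\<^sup>2)"
    by (simp only: of_real_sum complex_norm_square mult.commute)
  finally show ?thesis
    using of_real_eq_iff by blast
qed

lemma unit_root_mod_shift:
  assumes "D > 0"
  shows "unit_root D (int k * b) * unit_root D (- (int ((d + k) mod D) * b)) = unit_root D (- (int d * b))"
proof -
  have "- (int ((d + k) mod D) * b) = (int d + int k) mod int D * - b"
    by (simp only: of_nat_mod of_nat_add mult_minus_right)
  then have "unit_root D (- (int ((d + k) mod D) * b)) = unit_root D ((int d + int k) * - b)"
    by (simp only: unit_root_mod_mult[OF assms])
  also have "(int d + int k) * - b = - (int k * b) + - (int d * b)"
    by (simp add: algebra_simps)
  finally show ?thesis
    by (simp add: unit_root_add[symmetric])
qed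

theorem dft_ccorr:
  assumes "D > 0"
  shows "dft D (ccorr D h v) m = cnj (dft D v m) * dft D h m"
proof -
  let ?s = "complex_of_real (1 / sqrt (real D))"
  let ?g = "\<lambda>k j. of_real (v k) * (of_real (h j) *
      (unit_root D (int k * int m) * unit_root D (- (int j * int m))))"
  have "dft D (ccorr D h v) m = ?s * ?s * (\<Sum>d<D. \<Sum>k<D. of_real (v k) *
      (of_real (h ((d + k) mod D)) * unit_root D (- (int d * int m))))"
    unfolding dft_unit_root ccorr_def by (simp add: sum_distrib_left sum_distrib_right mult_ac)
  also have "\<dots> = ?s * ?s * (\<Sum>k<D. \<Sum>d<D. of_real (v k) *
      (of_real (h ((d + k) mod D)) * unit_root D (- (int d * int m))))"
    by (subst sum.swap) (rule refl)
  also have "\<dots> = ?s * ?s * (\<Sum>k<D. \<Sum>d<D. ?g k ((d + k) mod D))"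
    by (simp only: unit_root_mod_shift[OF assms])
  also have "\<dots> = ?s * ?s * (\<Sum>k<D. \<Sum>j<D. ?g k j)"
    by (rule arg_cong[where f="(*) (?s * ?s)"], rule sum.cong[OF refl], rule sum_mod_shift[OF assms])
  also have "\<dots> = cnj (dft D v m) * dft D h m"
    unfolding cnj_dft unfolding dft_unit_root by (simp add: sum_product mult_ac)
  finally show ?thesis .
qed

lemma dft_citer:
  assumes "D > 0"
  shows "dft D (citer D u x l) m = dft D x m * (\<Prod>i\<in>{1..l}. cnj (dft D (u i) m))"
  by (induction l) (simp_all add: dft_ccorr[OF assms] prod.cl_ivl_Suc mult_ac)

lemma vinner_citer_dft:
  assumes "D > 0" "L \<ge> 1"
  shows "of_real (vinner D (citer D u x (L - 1)) (u L)) =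
    (\<Sum>m<D. cnj (dft D x m) * (\<Prod>i\<in>{1..L}. dft D (u i) m))"
proof -
  have "(\<Prod>i\<in>{1..L}. dft D (u i) m) = (\<Prod>i\<in>{1..L - 1}. dft D (u i) m) * dft D (u L) m" for m
    using assms(2) prod.cl_ivl_Suc[of "\<lambda>i. dft D (u i) m" 1 "L - 1"] by simp
  then show ?thesis
    by (simp add: parseval[OF assms(1)] dft_citer[OF assms(1)] mult_ac)
qed

theorem hermitian_is_dft:
  assumes "D > 0" and herm: "\<And>m. m < D \<Longrightarrow> s ((D - m) mod D) = cnj (s m)"
  shows "\<exists>v. (\<forall>d\<ge>D. v d = 0) \<and> (\<forall>m<D. dft D v m = s m)"
proof -
  let ?s = "complex_of_real (1 / sqrt (real D))"
  define z where "z d = ?s * (\<Sum>m<D. s m * unit_root D (int m * int d))" for d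
  have z_real: "cnj (z d) = z d" for d
  proof -
    have "cnj (z d) = ?s * (\<Sum>m<D. s ((D - m) mod D) * unit_root D (int ((D - m) mod D) * int d))"
      unfolding z_def using herm unit_root_reflect[OF assms(1)] by (simp add: cnj_unit_root)
    also have "\<dots> = z d"
      unfolding z_def using sum_mod_reflect[of "\<lambda>m. s m * unit_root D (int m * int d)" D] by simp
    finally show ?thesis .
  qed
  define v where "v d = (if d < D then Re (z d) else 0)" for d
  have of_real_v: "of_real (v d) = z d" if "d < D" for d
    using that z_real[of d] by (simp add: v_def complex_eq_iff)
  have "dft D v m = s m" if "m < D" for m
  proof -
    have "unit_root D (int d * int m') * unit_root D (- (int d * int m)) = unit_root D (int d * (int m' - int m))"
      for m' d
      by (simp add: unit_root_add[symmetric] algebra_simps)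
    then have "dft D v m = ?s * ?s * (\<Sum>d<D. \<Sum>m'<D. s m' * unit_root D (int d * (int m' - int m)))"
      unfolding dft_unit_root using of_real_v
      by (simp add: z_def sum_distrib_left sum_distrib_right mult_ac)
    also have "\<dots> = ?s * ?s * (\<Sum>m'<D. s m' * (\<Sum>d<D. unit_root D (int d * (int m' - int m))))"
      by (subst sum.swap) (simp only: sum_distrib_left)
    also have "\<dots> = ?s * ?s * (s m * of_nat D)"
      using assms(1) that by (simp add: sum_unit_root_diff if_distrib cong: if_cong)
    also have "\<dots> = s m"
      unfolding of_real_inverse_sqrt_square[OF assms(1)] using assms(1) by simp
    finally show ?thesis .
  qed
  then show ?thesis
    by (intro exI[of _ v]) (simp add: v_def)
qed

lemma Pconv_eqI:
  assumes "\<forall>d\<ge>D. p d = 0" and "\<forall>x. vinner D x p = vinner D (citer D u x (L - 1)) (u L)"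
  shows "Pconv D L u = p"
  unfolding Pconv_def
proof (rule the_equality)
  fix q assume q: "(\<forall>d\<ge>D. q d = 0) \<and> (\<forall>x. vinner D x q = vinner D (citer D u x (L - 1)) (u L))"
  have "q d = p d" for d
  proof (cases "d < D")
    case True
    have "vinner D (\<lambda>k. if k = d then 1 else 0) r = (\<Sum>k<D. if k = d then r k else 0)" for r
      unfolding vinner_def by (rule sum.cong) auto
    then have "vinner D (\<lambda>k. if k = d then 1 else 0) r = r d" for r
      using True by simp
    then show ?thesis
      using q assms(2) by metis
  next
    case False
    then show ?thesis
      using q assms(1) by simp
  qed
  then show "q = p" ..
qed (use assms in blast)

lemma Pconv_eq_if_dft:
  assumes "D > 0" "L \<ge> 1" "\<forall>d\<ge>D. p d = 0"
    and "\<And>m. m < D \<Longrightarrow> dft D p m = (\<Prod>i\<in>{1..L}. dft D (u i) m)"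
  shows "Pconv D L u = p"
proof (rule Pconv_eqI[OF assms(3)], rule allI)
  fix x
  have "of_real (vinner D x p) = (\<Sum>m<D. cnj (dft D x m) * dft D p m)"
    by (rule parseval[OF assms(1)])
  also have "\<dots> = of_real (vinner D (citer D u x (L - 1)) (u L))"
    unfolding vinner_citer_dft[OF assms(1,2)] using assms(4) by simp
  finally show "vinner D x p = vinner D (citer D u x (L - 1)) (u L)"
    by simp
qed

theorem dft_Pconv:
  assumes "D > 0" "L \<ge> 1" "m < D"
  shows "dft D (Pconv D L u) m = (\<Prod>i\<in>{1..L}. dft D (u i) m)"
proof -
  obtain v where "\<forall>d\<ge>D. v d = 0" and v: "\<forall>m<D. dft D v m = (\<Prod>i\<in>{1..L}. dft D (u i) m)"
    using hermitian_is_dft[OF assms(1), of "\<lambda>m. \<Prod>i\<in>{1..L}. dft D (u i) m"]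
    by (auto simp: dft_reflect[OF assms(1)])
  then have "Pconv D L u = v"
    by (intro Pconv_eq_if_dft[OF assms(1,2)]) auto
  then show ?thesis
    using v assms(3) by simp
qed

lemma power2_powr: "0 \<le> (x::real) \<Longrightarrow> (x\<^sup>2) powr a = x powr (2 * a)"
  using powr_powr[of x 2 a] by simp

lemma powr_power2: "0 \<le> (x::real) \<Longrightarrow> (x powr a)\<^sup>2 = x powr (2 * a)"
  using powr_powr[of x a 2] by (simp add: mult.commute)

lemma card_mult_norm_prod_powr_le:
  fixes z :: "'a \<Rightarrow> 'b::real_normed_field"
  assumes "finite I" "I \<noteq> {}"
  shows "real (card I) * norm (\<Prod>i\<in>I. z i) powr (2 / real (card I)) \<le> (\<Sum>i\<in>I. (norm (z i))\<^sup>2)"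
proof -
  let ?n = "real (card I)"
  have "?n > 0"
    using assms by (simp add: card_gt_0_iff)
  have "(\<Prod>i\<in>I. (norm (z i))\<^sup>2) powr (1 / ?n) \<le> (\<Sum>i\<in>I. (norm (z i))\<^sup>2 / ?n)"
    using assms by (intro arith_geom_mean) auto
  moreover have "(\<Prod>i\<in>I. (norm (z i))\<^sup>2) powr (1 / ?n) = norm (\<Prod>i\<in>I. z i) powr (2 / ?n)"
    by (simp add: prod_norm power2_powr flip: prod_power_distrib)
  ultimately show ?thesis
    using \<open>?n > 0\<close> by (simp add: sum_divide_distrib[symmetric] field_simps)
qed

definition balanced_factor :: "nat \<Rightarrow> complex \<Rightarrow> nat \<Rightarrow> complex" where
  "balanced_factor L z i = (if i = 1 then sgn z else 1) * of_real (cmod z powr (1 / real L))"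

lemma prod_balanced_factor:
  assumes "L \<ge> 1"
  shows "(\<Prod>i\<in>{1..L}. balanced_factor L z i) = z"
proof -
  have "(cmod z powr (1 / real L)) ^ L = cmod z"
    using assms by (cases "z = 0") (simp_all add: powr_power)
  then have root: "of_real (cmod z powr (1 / real L)) ^ L = complex_of_real (cmod z)"
    by (simp only: of_real_power[symmetric])
  have "(\<Prod>i\<in>{1..L}. balanced_factor L z i) =
      (\<Prod>i\<in>{1..L}. if i = 1 then sgn z else 1) * of_real (cmod z powr (1 / real L)) ^ L"
    by (simp add: balanced_factor_def prod.distrib)
  also have "\<dots> = sgn z * of_real (cmod z)"
    using assms by (simp only: root prod.delta) simp
  also have "\<dots> = z"
    by (cases "z = 0") (simp_all add: sgn_eq)
  finally show ?thesis .
qed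

lemma norm_balanced_factor: "cmod (balanced_factor L z i) = cmod z powr (1 / real L)"
  by (cases "z = 0") (simp_all add: balanced_factor_def norm_mult norm_sgn)

lemma balanced_factor_cnj: "balanced_factor L (cnj z) i = cnj (balanced_factor L z i)"
  by (simp add: balanced_factor_def sgn_eq)

lemma pnorm_pow_dft_Pconv_le_sqnorm_tuple:
  assumes "D > 0" "L \<ge> 1"
  shows "real L * pnorm_pow D (2 / real L) (dft D (Pconv D L u)) \<le> sqnorm_tuple D L u"
proof -
  have "real L * cmod (dft D (Pconv D L u) m) powr (2 / real L) \<le> (\<Sum>i\<in>{1..L}. (cmod (dft D (u i) m))\<^sup>2)"
    if "m < D" for m
  proof -
    have "real L * cmod (dft D (Pconv D L u) m) powr (2 / real L) =
        real (card {1..L}) * cmod (\<Prod>i\<in>{1..L}. dft D (u i) m) powr (2 / real (card {1..L}))"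
      by (simp only: dft_Pconv[OF assms that] card_atLeastAtMost diff_Suc_1)
    also have "\<dots> \<le> (\<Sum>i\<in>{1..L}. (cmod (dft D (u i) m))\<^sup>2)"
      using assms(2) by (intro card_mult_norm_prod_powr_le) auto
    finally show ?thesis .
  qed
  then have "real L * pnorm_pow D (2 / real L) (dft D (Pconv D L u)) \<le>
      (\<Sum>m<D. \<Sum>i\<in>{1..L}. (cmod (dft D (u i) m))\<^sup>2)"
    unfolding pnorm_pow_def sum_distrib_left by (intro sum_mono) simp
  also have "\<dots> = sqnorm_tuple D L u"
    unfolding sqnorm_tuple_def plancherel[OF assms(1), of "u i" for i] by (rule sum.swap)
  finally show ?thesis .
qed

lemma Pconv_minimizer_exists:
  assumes "D > 0" "L \<ge> 1"
  shows "\<exists>u. (\<forall>d<D. Pconv D L u d = w d) \<and>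
    sqnorm_tuple D L u = real L * pnorm_pow D (2 / real L) (dft D w)"
proof -
  have "\<exists>v. (\<forall>d\<ge>D. v d = 0) \<and> (\<forall>m<D. dft D v m = balanced_factor L (dft D w m) i)" for i
    by (rule hermitian_is_dft[OF assms(1)]) (simp add: dft_reflect[OF assms(1)] balanced_factor_cnj)
  then obtain u where u: "\<And>i m. m < D \<Longrightarrow> dft D (u i) m = balanced_factor L (dft D w m) i"
    by metis
  define w' where "w' d = (if d < D then w d else 0)" for d
  have "dft D w' = dft D w"
    by (rule dft_cong) (simp add: w'_def)
  then have "Pconv D L u = w'"
    using assms prod_balanced_factor[OF assms(2)] by (intro Pconv_eq_if_dft) (simp_all add: w'_def u)
  moreover have "(\<Sum>d<D. (u i d)\<^sup>2) = (\<Sum>m<D. cmod (dft D w m) powr (2 / real L))" for i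
    unfolding plancherel[OF assms(1), of "u i"] by (simp add: u norm_balanced_factor powr_power2)
  then have "sqnorm_tuple D L u = real L * pnorm_pow D (2 / real L) (dft D w)"
    by (simp add: sqnorm_tuple_def pnorm_pow_def)
  ultimately show ?thesis
    by (intro exI[of _ u]) (simp add: w'_def)
qed

theorem lemma4:
  fixes L D :: nat and w :: "nat \<Rightarrow> real"
  assumes "L \<ge> 1" and "D \<ge> 1"
  shows "(\<exists>u. (\<forall>d<D. Pconv D L u d = w d) \<and>
              sqnorm_tuple D L u = real L * pnorm_pow D (2 / real L) (dft D w)) \<and>
         (\<forall>u. (\<forall>d<D. Pconv D L u d = w d) \<longrightarrow>
              real L * pnorm_pow D (2 / real L) (dft D w) \<le> sqnorm_tuple D L u)"
proof -
  have D: "D > 0"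
    using assms(2) by simp
  have "real L * pnorm_pow D (2 / real L) (dft D w) \<le> sqnorm_tuple D L u"
    if "\<forall>d<D. Pconv D L u d = w d" for u
  proof -
    have "dft D w = dft D (Pconv D L u)"
      using that by (intro dft_cong) simp
    then show ?thesis
      using pnorm_pow_dft_Pconv_le_sqnorm_tuple[OF D assms(1)] by simp
  qed
  then show ?thesis
    using Pconv_minimizer_exists[OF D assms(1)] by blast
qed

end
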